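(* Assume $\gamma\neq\pm2$, $p_1,\dots,p_N>0$ and $q_1,\dots,q_N$ pairwise distinct. For each integer $m\ge1$ let $\tau_m(z)=\mathrm{tr}\big(\mathcal L(z)^m\big)$. Then there is a polynomial $P_m(X)$ of degree $m$ in one variable $X$, whose coefficients are functions of $(p,q)$ and which has no constant term, such that $\tau_m(z)=P_m(\Lambda(z))$ for all $z\neq-\gamma/2$. The coefficient of $X$ in $P_m$ is $$\mathfrak h^{(m)}=m\,\mathrm{tr}\Big(\big(T+\tfrac{\gamma}{2}A\big)\,(S+A)^{m-1}\Big).$$ Moreover $\tau_m(z)$ is a homogeneous symmetric function of $p_1,\dots,p_N$ of degree $m$.
   Context: Fix $N\ge2$, $\nu\neq0$ and a constant $\gamma$. The variables are $p_1,\dots,p_N$ and $q_1,\dots,q_N$. Write $q_{ij}=q_i-q_j$ and $\mathfrak s_{ij}=\mathrm{sgn}(q_i-q_j)$, with the convention $\mathfrak s_{ii}=0$. $E_{ij}$ denotes the elementary $N\times N$ matrix. Define the $N\times N$ matrices $A=\sum_{i,j}\sqrt{p_ip_j}\,\sinh\frac{\nu}{2}(q_i-q_j)\,E_{ij}$, $T=\sum_{i,j}\sqrt{p_ip_j}\,\cosh\frac{\nu}{2}(q_i-q_j)\,E_{ij}$ and $S=\sum_{i,j}\sqrt{p_ip_j}\,\mathfrak s_{ij}\sinh\frac{\nu}{2}(q_i-q_j)\,E_{ij}$. Let $\sigma(z)=z^\sigma=-\frac{\frac{\gamma}{2}z+1}{z+\frac{\gamma}{2}}$, $\Lambda(z)=\frac{z+z^\sigma}{2}=\frac{z^2-1}{2z+\gamma}$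 and $\xi(z)=\frac{z-z^\sigma}{2}=\frac{z^2+\gamma z+1}{2z+\gamma}$. The Lax matrix is $\mathcal L(z)=\Lambda(z)\,T+S+\xi(z)\,A$; equivalently $\mathcal L(z)=z\,T^h+z^\sigma (T^h)^t+S$ with $T^h=\frac12\sum_{i,j}\sqrt{p_ip_j}\,e^{\frac{\nu}{2}(q_i-q_j)}E_{ij}$. *)

theory Defs
  imports "HOL-Analysis.Analysis" "HOL-Computational_Algebra.Polynomial"
begin

text \<open>Particle index set: a finite type 'n with CARD('n) = N.
  Momenta p and positions q are vectors in real^'n; matrices are real^'n^'n.\<close>

definition Amat :: "real \<Rightarrow> real^'n \<Rightarrow> real^'n \<Rightarrow> real^'n^'n" where
  "Amat \<nu> p q = (\<chi> i j. sqrt (p$i * p$j) * sinh (\<nu>/2 * (q$i - q$j)))"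

definition Tmat :: "real \<Rightarrow> real^'n \<Rightarrow> real^'n \<Rightarrow> real^'n^'n" where
  "Tmat \<nu> p q = (\<chi> i j. sqrt (p$i * p$j) * cosh (\<nu>/2 * (q$i - q$j)))"

text \<open>sgn 0 = 0 gives the convention s_ii = 0.\<close>
definition Smat :: "real \<Rightarrow> real^'n \<Rightarrow> real^'n \<Rightarrow> real^'n^'n" where
  "Smat \<nu> p q = (\<chi> i j. sqrt (p$i * p$j) * sgn (q$i - q$j) * sinh (\<nu>/2 * (q$i - q$j)))"

definition Lam :: "real \<Rightarrow> real \<Rightarrow> real" where
  "Lam \<gamma> z = (z^2 - 1) / (2*z + \<gamma>)"

definition Xi :: "real \<Rightarrow> real \<Rightarrow> real" where
  "Xi \<gamma> z = (z^2 + \<gamma>*z + 1) / (2*z + \<gamma>)"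

definition Lax :: "real \<Rightarrow> real \<Rightarrow> real^'n \<Rightarrow> real^'n \<Rightarrow> real \<Rightarrow> real^'n^'n" where
  "Lax \<nu> \<gamma> p q z = Lam \<gamma> z *\<^sub>R Tmat \<nu> p q + Smat \<nu> p q + Xi \<gamma> z *\<^sub>R Amat \<nu> p q"

fun matpow :: "real^'n^'n \<Rightarrow> nat \<Rightarrow> real^'n^'n" where
  "matpow M 0 = mat 1"
| "matpow M (Suc k) = M ** matpow M k"

definition tau :: "real \<Rightarrow> real \<Rightarrow> real^'n \<Rightarrow> real^'n \<Rightarrow> nat \<Rightarrow> real \<Rightarrow> real" where
  "tau \<nu> \<gamma> p q m z = trace (matpow (Lax \<nu> \<gamma> p q z) m)"

end

theory Submission
  imports Defs
begin

(*
  Write x = Lam gamma z and xi = Xi gamma z; then xi^2 = x^2 + gamma x + 1 and the Lax matrix is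
  x T + S + xi A. Reducing modulo this relation, every entry of (x T + S + xi A)^m becomes
  a(x) + xi b(x) with polynomials a, b. Since T and S are symmetric and A is antisymmetric,
  transposition replaces xi by -xi without changing the trace, so the odd part of the trace
  vanishes along a branch of the conic and is zero: tau_m = P(Lam) with P the even part.
  The coefficients of P are read off at two points of the conic. At (x, xi) = (0, 1) the
  matrix is S + A, strictly triangular for the order of the q_i, so P(0) = 0; to first order
  there xi = 1 + gamma x / 2, which yields the coefficient of X. At infinity xi ~ x, and
  T + A is a rank one matrix u v^t with v^t u = p_1 + ... + p_N, so the leading coefficient
  is (p_1 + ... + p_N)^m, which is nonzero. Homogeneity and symmetry in p are immediate
  because each entry of the Lax matrix is linear in sqrt (p_i p_j).
*)

lemma matpow_Suc_right: "matpow M (Suc k) = matpow M k ** M"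
  by (induction k) (simp_all add: matrix_mul_assoc)

lemma matpow_add: "matpow M (a + b) = matpow M a ** matpow M b"
  by (induction a) (simp_all add: matrix_mul_assoc)

lemma matpow_transpose: "matpow (transpose M) k = transpose (matpow M k)"
  by (induction k) (simp, metis matpow.simps(2) matpow_Suc_right matrix_transpose_mul)

lemma matpow_scaleR: "matpow (c *\<^sub>R M) k = c ^ k *\<^sub>R matpow M k"
  by (induction k) (simp_all add: scalar_matrix_assoc[symmetric] matrix_scalar_ac)

lemma transpose_add: "transpose (M + N) = transpose M + transpose N"
  by (simp add: transpose_def vec_eq_iff)

lemma trace_transpose: "trace (transpose M) = trace M"
  by (simp add: trace_def transpose_def)

lemma trace_scaleR: "trace (c *\<^sub>R M) = c * trace M"
  by (simp add: trace_def sum_distrib_left)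

lemma matpow_strictly_triangular_entry:
  fixes M :: "real^'n::finite^'n" and f :: "'n \<Rightarrow> real"
  assumes "\<And>i j. M$i$j \<noteq> 0 \<Longrightarrow> f j < f i"
  shows "matpow M (Suc k) $ i $ j \<noteq> 0 \<Longrightarrow> f j < f i"
proof (induction k arbitrary: i j)
  case 0
  then show ?case using assms by simp
next
  case (Suc k)
  then have "(\<Sum>l\<in>UNIV. M$i$l * matpow M (Suc k) $ l $ j) \<noteq> 0"
    by (simp add: matrix_matrix_mult_def)
  then obtain l where "M$i$l * matpow M (Suc k) $ l $ j \<noteq> 0"
    by (meson sum.not_neutral_contains_not_neutral)
  then have "f l < f i" "f j < f l" using assms Suc.IH by auto
  then show ?case by simp
qed

lemma trace_matpow_strictly_triangular:
  fixes M :: "real^'n::finite^'n" and f :: "'n \<Rightarrow> real"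
  assumes "\<And>i j. M$i$j \<noteq> 0 \<Longrightarrow> f j < f i"
  shows "trace (matpow M (Suc k)) = 0"
  unfolding trace_def using matpow_strictly_triangular_entry[OF assms] by (meson less_irrefl sum.neutral)

lemma matpow_rank_one_entry:
  fixes M :: "real^'n::finite^'n"
  assumes "\<And>i j. M$i$j = u i * v j"
  shows "matpow M (Suc k) $ i $ j = (\<Sum>l\<in>UNIV. u l * v l) ^ k * u i * v j"
proof (induction k arbitrary: i j)
  case 0
  then show ?case using assms by simp
next
  case (Suc k)
  have "matpow M (Suc (Suc k)) $ i $ j
      = (\<Sum>l\<in>UNIV. u i * v l * ((\<Sum>l\<in>UNIV. u l * v l) ^ k * u l * v j))"
    unfolding matpow.simps(2)[of M "Suc k"] matrix_matrix_mult_def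
    by (simp add: Suc.IH assms del: matpow.simps)
  also have "\<dots> = (\<Sum>l\<in>UNIV. u l * v l) ^ Suc k * u i * v j"
    by (simp add: sum_distrib_left sum_distrib_right mult_ac)
  finally show ?case .
qed

lemma trace_matpow_rank_one:
  fixes M :: "real^'n::finite^'n"
  assumes "\<And>i j. M$i$j = u i * v j"
  shows "trace (matpow M (Suc k)) = (\<Sum>l\<in>UNIV. u l * v l) ^ Suc k"
proof -
  have "trace (matpow M (Suc k)) = (\<Sum>i\<in>UNIV. u i * v i * (\<Sum>l\<in>UNIV. u l * v l) ^ k)"
    unfolding trace_def matpow_rank_one_entry[OF assms] by (simp add: mult_ac)
  then show ?thesis by (simp add: sum_distrib_right[symmetric])
qed

lemma matpow_permute_entry:
  fixes M M' :: "real^'n::finite^'n"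
  assumes "\<sigma> permutes UNIV" and "\<And>i j. M'$i$j = M$(\<sigma> i)$(\<sigma> j)"
  shows "matpow M' k $ i $ j = matpow M k $ (\<sigma> i) $ (\<sigma> j)"
proof (induction k arbitrary: i j)
  case 0
  then show ?case using permutes_inj[OF assms(1)] by (simp add: mat_def inj_eq)
next
  case (Suc k)
  have "matpow M' (Suc k) $ i $ j = (\<Sum>l\<in>UNIV. M$(\<sigma> i)$(\<sigma> l) * matpow M k $ (\<sigma> l) $ (\<sigma> j))"
    by (simp add: matrix_matrix_mult_def Suc.IH assms(2))
  also have "\<dots> = (\<Sum>l\<in>UNIV. M$(\<sigma> i)$l * matpow M k $ l $ (\<sigma> j))"
    using sum.permute[OF assms(1), of "\<lambda>l. M$(\<sigma> i)$l * matpow M k $ l $ (\<sigma> j)"]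
    by (simp add: comp_def)
  finally show ?case by (simp add: matrix_matrix_mult_def)
qed

lemma trace_matpow_permute:
  fixes M M' :: "real^'n::finite^'n"
  assumes "\<sigma> permutes UNIV" and "\<And>i j. M'$i$j = M$(\<sigma> i)$(\<sigma> j)"
  shows "trace (matpow M' k) = trace (matpow M k)"
  unfolding trace_def matpow_permute_entry[OF assms]
  using sum.permute[OF assms(1), of "\<lambda>l. matpow M k $ l $ l"] by (simp add: comp_def)

text \<open>The coefficient of \<open>\<epsilon>\<close> in \<open>(X + \<epsilon> Y)^k\<close>.\<close>
fun pow_linear_term :: "real^'n::finite^'n \<Rightarrow> real^'n^'n \<Rightarrow> nat \<Rightarrow> real^'n^'n" where
  "pow_linear_term X Y 0 = 0"
| "pow_linear_term X Y (Suc k) = X ** pow_linear_term X Y k + Y ** matpow X k"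

lemma trace_pow_linear_term:
  "trace (pow_linear_term X Y k) = real k * trace (Y ** matpow X (k - 1))"
proof -
  have "trace (matpow X r ** pow_linear_term X Y k) = real k * trace (Y ** matpow X (k + r - 1))" for r
  proof (induction k arbitrary: r)
    case 0
    then show ?case by (simp add: trace_def)
  next
    case (Suc k)
    have "trace (matpow X r ** pow_linear_term X Y (Suc k))
        = trace (matpow X (Suc r) ** pow_linear_term X Y k) + trace (matpow X r ** (Y ** matpow X k))"
      by (simp add: matrix_add_ldistrib trace_add matrix_mul_assoc matpow_Suc_right[symmetric]
          del: matpow.simps)
    also have "trace (matpow X r ** (Y ** matpow X k)) = trace (Y ** matpow X (k + r))"
      by (metis matpow_add matrix_mul_assoc trace_mul_sym)
    finally show ?case using Suc.IH[of "Suc r"] by (simp add: algebra_simps)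
  qed
  from this[of 0] show ?thesis by simp
qed

context
  fixes g :: real and T S A :: "real^'n::finite^'n"
begin

text \<open>Entry \<open>(i, j)\<close> of \<open>(x T + S + \<xi> A)^k\<close>, reduced modulo \<open>\<xi>\<^sup>2 = x\<^sup>2 + g x + 1\<close>, is
  \<open>even_part k i j + \<xi> odd_part k i j\<close> with polynomials in \<open>x\<close>.\<close>
fun even_part :: "nat \<Rightarrow> 'n \<Rightarrow> 'n \<Rightarrow> real poly"
and odd_part :: "nat \<Rightarrow> 'n \<Rightarrow> 'n \<Rightarrow> real poly" where
  "even_part 0 i j = (if i = j then 1 else 0)"
| "odd_part 0 i j = 0"
| "even_part (Suc k) i j = (\<Sum>l\<in>UNIV.
     smult (S$i$l) (even_part k l j) + smult (T$i$l) (pCons 0 (even_part k l j))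
     + smult (A$i$l) ([:1, g, 1:] * odd_part k l j))"
| "odd_part (Suc k) i j = (\<Sum>l\<in>UNIV.
     smult (S$i$l) (odd_part k l j) + smult (T$i$l) (pCons 0 (odd_part k l j))
     + smult (A$i$l) (even_part k l j))"

lemma matpow_eq_parts:
  assumes "\<xi>^2 = x^2 + g*x + 1"
  shows "matpow (x *\<^sub>R T + S + \<xi> *\<^sub>R A) k $ i $ j
     = poly (even_part k i j) x + \<xi> * poly (odd_part k i j) x"
proof (induction k arbitrary: i j)
  case 0
  then show ?case by (simp add: mat_def)
next
  case (Suc k)
  have "matpow (x *\<^sub>R T + S + \<xi> *\<^sub>R A) (Suc k) $ i $ j
     = (\<Sum>l\<in>UNIV. (x * T$i$l + S$i$l + \<xi> * A$i$l) *
          (poly (even_part k l j) x + \<xi> * poly (odd_part k l j) x))"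
    by (simp add: matrix_matrix_mult_def Suc.IH)
  also have "\<dots> = poly (even_part (Suc k) i j) x + \<xi> * poly (odd_part (Suc k) i j) x"
    unfolding even_part.simps odd_part.simps poly_sum sum_distrib_left sum.distrib[symmetric]
    by (rule sum.cong[OF refl])
      (simp only: poly_add poly_smult poly_pCons poly_mult poly_0, use assms in algebra)
  finally show ?case .
qed

lemma parts_at_origin:
  "coeff (even_part k i j) 0 + coeff (odd_part k i j) 0 = matpow (S + A) k $ i $ j"
  using matpow_eq_parts[of 1 0 k i j] by (simp add: poly_0_coeff_0)

text \<open>Near \<open>(x, \<xi>) = (0, 1)\<close> the conic is \<open>\<xi> = 1 + g x / 2 + O(x\<^sup>2)\<close>, so the matrix is
  \<open>(S + A) + x (T + g/2 A)\<close> to first order.\<close>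
lemma parts_first_order:
  "coeff (even_part k i j) 1 + coeff (odd_part k i j) 1 + g/2 * coeff (odd_part k i j) 0
     = pow_linear_term (S + A) (T + (g/2) *\<^sub>R A) k $ i $ j"
proof (induction k arbitrary: i j)
  case 0
  then show ?case by simp
next
  case (Suc k)
  let ?e1 = "\<lambda>l. coeff (even_part k l j) 1" and ?o1 = "\<lambda>l. coeff (odd_part k l j) 1"
  let ?e0 = "\<lambda>l. coeff (even_part k l j) 0" and ?o0 = "\<lambda>l. coeff (odd_part k l j) 0"
  have "pow_linear_term (S + A) (T + (g/2) *\<^sub>R A) (Suc k) $ i $ j
    = (\<Sum>l\<in>UNIV. (S$i$l + A$i$l) * (?e1 l + ?o1 l + g/2 * ?o0 l)
         + (T$i$l + g/2 * A$i$l) * (?e0 l + ?o0 l))"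
    by (simp add: matrix_matrix_mult_def Suc.IH[symmetric] parts_at_origin sum.distrib)
  also have "\<dots> = coeff (even_part (Suc k) i j) 1 + coeff (odd_part (Suc k) i j) 1
     + g/2 * coeff (odd_part (Suc k) i j) 0"
    unfolding even_part.simps odd_part.simps coeff_sum sum_distrib_left sum.distrib[symmetric]
    by (rule sum.cong[OF refl]) (simp add: field_simps)
  finally show ?case by simp
qed

lemma parts_coeff_eq_0:
  "(k < n \<longrightarrow> coeff (even_part k i j) n = 0) \<and> (k \<le> n \<longrightarrow> coeff (odd_part k i j) n = 0)"
proof (induction k arbitrary: n i j)
  case 0
  then show ?case by (simp add: coeff_1)
next
  case (Suc k)
  have even: "coeff (even_part (Suc k) i j) (Suc (Suc m)) = 0" if "k \<le> m" for m
    using that by (simp add: coeff_sum Suc.IH)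
  have odd: "coeff (odd_part (Suc k) i j) (Suc m) = 0" if "k \<le> m" for m
    using that by (simp add: coeff_sum Suc.IH)
  show ?case
  proof (intro conjI impI)
    assume "Suc k < n"
    then obtain m where "n = Suc (Suc m)" "k \<le> m" by (intro that[of "n - 2"]) auto
    then show "coeff (even_part (Suc k) i j) n = 0" using even by simp
  next
    assume "Suc k \<le> n"
    then obtain m where "n = Suc m" "k \<le> m" by (intro that[of "n - 1"]) auto
    then show "coeff (odd_part (Suc k) i j) n = 0" using odd by simp
  qed
qed

text \<open>At infinity \<open>\<xi> \<sim> x\<close>, so the top coefficients only see \<open>T + A\<close>.\<close>
lemma parts_top_coeff:
  "coeff (even_part k i j) k + coeff (pCons 0 (odd_part k i j)) k = matpow (T + A) k $ i $ j"
proof (induction k arbitrary: i j)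
  case 0
  then show ?case by (simp add: mat_def coeff_1)
next
  case (Suc k)
  have "matpow (T + A) (Suc k) $ i $ j = (\<Sum>l\<in>UNIV. (T$i$l + A$i$l) *
      (coeff (even_part k l j) k + coeff (pCons 0 (odd_part k l j)) k))"
    by (simp add: matrix_matrix_mult_def Suc.IH)
  also have "\<dots> = coeff (even_part (Suc k) i j) (Suc k) + coeff (pCons 0 (odd_part (Suc k) i j)) (Suc k)"
    unfolding even_part.simps odd_part.simps coeff_sum coeff_pCons_Suc sum.distrib[symmetric]
    by (rule sum.cong[OF refl])
      (simp add: parts_coeff_eq_0 algebra_simps smult_pCons[where b = 0, unfolded mult_zero_right, symmetric]
        del: smult_pCons)
  finally show ?case by simp
qed

definition even_trace :: "nat \<Rightarrow> real poly" where
  "even_trace k = (\<Sum>i\<in>UNIV. even_part k i i)"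

definition odd_trace :: "nat \<Rightarrow> real poly" where
  "odd_trace k = (\<Sum>i\<in>UNIV. odd_part k i i)"

lemma trace_matpow_eq_traces:
  assumes "\<xi>^2 = x^2 + g*x + 1"
  shows "trace (matpow (x *\<^sub>R T + S + \<xi> *\<^sub>R A) k)
     = poly (even_trace k) x + \<xi> * poly (odd_trace k) x"
  by (simp add: trace_def even_trace_def odd_trace_def poly_sum matpow_eq_parts[OF assms]
      sum.distrib sum_distrib_left)

lemma degree_even_trace_le: "degree (even_trace k) \<le> k"
  by (rule degree_le) (simp add: even_trace_def coeff_sum parts_coeff_eq_0)

lemma traces_top_coeff:
  "coeff (even_trace k) k + coeff (pCons 0 (odd_trace k)) k = trace (matpow (T + A) k)"
proof -
  have "coeff (pCons 0 (odd_trace k)) k = (\<Sum>i\<in>UNIV. coeff (pCons 0 (odd_part k i i)) k)"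
    by (cases k) (simp_all add: odd_trace_def coeff_sum del: odd_part.simps)
  then show ?thesis
    by (simp add: even_trace_def trace_def coeff_sum parts_top_coeff[symmetric] sum.distrib
        del: even_part.simps odd_part.simps)
qed

lemma traces_first_order:
  "coeff (even_trace k) 1 + coeff (odd_trace k) 1 + g/2 * coeff (odd_trace k) 0
     = trace (pow_linear_term (S + A) (T + (g/2) *\<^sub>R A) k)"
  unfolding even_trace_def odd_trace_def trace_def coeff_sum parts_first_order[symmetric]
  by (simp add: sum.distrib sum_distrib_left del: even_part.simps odd_part.simps)

context
  assumes transpose_T: "transpose T = T"
    and transpose_S: "transpose S = S"
    and transpose_A: "transpose A = - A"
begin

lemma trace_matpow_uminus_odd:
  "trace (matpow (x *\<^sub>R T + S + (-\<xi>) *\<^sub>R A) k) = trace (matpow (x *\<^sub>R T + S + \<xi> *\<^sub>R A) k)"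
proof -
  have "transpose (x *\<^sub>R T + S + \<xi> *\<^sub>R A) = x *\<^sub>R T + S + (-\<xi>) *\<^sub>R A"
    by (simp add: transpose_add transpose_scalar transpose_T transpose_S transpose_A)
  then show ?thesis by (metis matpow_transpose trace_transpose)
qed

lemma odd_trace_eq_0: "odd_trace k = 0"
proof (rule ccontr)
  assume "odd_trace k \<noteq> 0"
  then have "finite {x. poly (odd_trace k) x = 0}" by (rule poly_roots_finite)
  moreover have "{\<bar>g\<bar> + 1..} \<subseteq> {x. poly (odd_trace k) x = 0}"
  proof
    fix x assume "x \<in> {\<bar>g\<bar> + 1..}"
    then have "0 \<le> x * (x + g)" by simp
    then have pos: "0 < x^2 + g*x + 1" by (simp add: power2_eq_square algebra_simps)
    define \<xi> where "\<xi> = sqrt (x^2 + g*x + 1)"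
    have "\<xi>^2 = x^2 + g*x + 1" "(-\<xi>)^2 = x^2 + g*x + 1" "\<xi> > 0"
      using pos by (simp_all add: \<xi>_def)
    then have "poly (even_trace k) x + (-\<xi>) * poly (odd_trace k) x
        = poly (even_trace k) x + \<xi> * poly (odd_trace k) x"
      using trace_matpow_uminus_odd[of x \<xi> k] by (simp only: trace_matpow_eq_traces)
    with \<open>\<xi> > 0\<close> show "x \<in> {x. poly (odd_trace k) x = 0}" by simp
  qed
  ultimately show False
    using infinite_Ici finite_subset by blast
qed

lemma trace_matpow_eq_even_trace:
  assumes "\<xi>^2 = x^2 + g*x + 1"
  shows "trace (matpow (x *\<^sub>R T + S + \<xi> *\<^sub>R A) k) = poly (even_trace k) x"
  by (simp add: trace_matpow_eq_traces[OF assms] odd_trace_eq_0)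

lemma coeff_0_even_trace: "coeff (even_trace k) 0 = trace (matpow (S + A) k)"
  using trace_matpow_eq_even_trace[of 1 0 k] by (simp add: poly_0_coeff_0)

lemma coeff_1_even_trace:
  "coeff (even_trace k) 1 = real k * trace ((T + (g/2) *\<^sub>R A) ** matpow (S + A) (k - 1))"
  using traces_first_order[of k] by (simp add: odd_trace_eq_0 trace_pow_linear_term)

lemma coeff_even_trace_top: "coeff (even_trace k) k = trace (matpow (T + A) k)"
  using traces_top_coeff[of k] by (simp add: odd_trace_eq_0)

end

end

lemma cosh_half_diff_commute: "cosh (\<nu>/2 * (a - b)) = cosh (\<nu>/2 * (b - a))"
  using cosh_minus[of "\<nu>/2 * (b - a)"] by (simp add: algebra_simps)

lemma sinh_half_diff_commute: "sinh (\<nu>/2 * (a - b)) = - sinh (\<nu>/2 * (b - a))"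
  using sinh_minus[of "\<nu>/2 * (b - a)"] by (simp add: algebra_simps)

lemma transpose_Tmat: "transpose (Tmat \<nu> p q) = Tmat \<nu> p q"
proof -
  have "transpose (Tmat \<nu> p q) $ i $ j = Tmat \<nu> p q $ i $ j" for i j
    using cosh_half_diff_commute[of \<nu> "q$j" "q$i"] by (simp add: transpose_def Tmat_def mult.commute)
  then show ?thesis by (simp add: vec_eq_iff)
qed

lemma transpose_Smat: "transpose (Smat \<nu> p q) = Smat \<nu> p q"
proof -
  have "transpose (Smat \<nu> p q) $ i $ j = Smat \<nu> p q $ i $ j" for i j
    using sinh_half_diff_commute[of \<nu> "q$j" "q$i"] sgn_minus[of "q$i - q$j"]
    by (simp add: transpose_def Smat_def mult.commute)
  then show ?thesis by (simp add: vec_eq_iff)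
qed

lemma transpose_Amat: "transpose (Amat \<nu> p q) = - Amat \<nu> p q"
proof -
  have "transpose (Amat \<nu> p q) $ i $ j = (- Amat \<nu> p q) $ i $ j" for i j
    using sinh_half_diff_commute[of \<nu> "q$j" "q$i"] by (simp add: transpose_def Amat_def mult.commute)
  then show ?thesis by (simp add: vec_eq_iff)
qed

lemma Smat_plus_Amat_nonzero_imp_less:
  assumes "(Smat \<nu> p q + Amat \<nu> p q) $ i $ j \<noteq> 0"
  shows "q$j < q$i"
  using assms by (cases "q$i" "q$j" rule: linorder_cases) (auto simp: Smat_def Amat_def)

lemma trace_matpow_Tmat_plus_Amat:
  assumes "\<And>i. 0 \<le> p$i"
  shows "trace (matpow (Tmat \<nu> p q + Amat \<nu> p q) (Suc k)) = (\<Sum>i\<in>UNIV. p$i) ^ Suc k"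
proof -
  let ?u = "\<lambda>i. sqrt (p$i) * exp (\<nu>/2 * q$i)" and ?v = "\<lambda>j. sqrt (p$j) * exp (- (\<nu>/2 * q$j))"
  have "(Tmat \<nu> p q + Amat \<nu> p q) $ i $ j = ?u i * ?v j" for i j
  proof -
    have "(Tmat \<nu> p q + Amat \<nu> p q) $ i $ j = sqrt (p$i * p$j) * exp (\<nu>/2 * (q$i - q$j))"
      by (simp add: Tmat_def Amat_def distrib_left[symmetric] cosh_plus_sinh)
    also have "\<dots> = ?u i * ?v j"
      by (simp add: real_sqrt_mult exp_add[symmetric] algebra_simps)
    finally show ?thesis .
  qed
  then have "trace (matpow (Tmat \<nu> p q + Amat \<nu> p q) (Suc k)) = (\<Sum>i\<in>UNIV. ?u i * ?v i) ^ Suc k"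
    by (rule trace_matpow_rank_one)
  moreover have "?u i * ?v i = p$i" for i
    using assms[of i] by (simp add: exp_minus field_simps)
  ultimately show ?thesis by simp
qed

lemma Xi_squared:
  assumes "z \<noteq> -\<gamma>/2"
  shows "(Xi \<gamma> z)^2 = (Lam \<gamma> z)^2 + \<gamma> * Lam \<gamma> z + 1"
proof -
  have "2*z + \<gamma> \<noteq> 0" using assms by (auto simp: field_simps)
  then show ?thesis
    by (simp add: Xi_def Lam_def divide_simps) algebra
qed

lemma Lax_scaleR:
  assumes "0 \<le> c"
  shows "Lax \<nu> \<gamma> (c *\<^sub>R p) q z = c *\<^sub>R Lax \<nu> \<gamma> p q z"
proof -
  have sqrt_scale: "sqrt (c * x * (c * y)) = c * sqrt (x * y)" for x y
    using assms by (simp add: real_sqrt_mult mult_ac)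
  have "Tmat \<nu> (c *\<^sub>R p) q = c *\<^sub>R Tmat \<nu> p q" "Smat \<nu> (c *\<^sub>R p) q = c *\<^sub>R Smat \<nu> p q"
    "Amat \<nu> (c *\<^sub>R p) q = c *\<^sub>R Amat \<nu> p q"
    by (simp_all add: vec_eq_iff Tmat_def Smat_def Amat_def sqrt_scale)
  then show ?thesis by (simp add: Lax_def scaleR_add_right mult.commute)
qed

lemma tau_scaleR: "0 \<le> c \<Longrightarrow> tau \<nu> \<gamma> (c *\<^sub>R p) q m z = c ^ m * tau \<nu> \<gamma> p q m z"
  by (simp add: tau_def Lax_scaleR matpow_scaleR trace_scaleR)

lemma tau_permute:
  assumes "\<sigma> permutes UNIV"
  shows "tau \<nu> \<gamma> (\<chi> i. p$(\<sigma> i)) (\<chi> i. q$(\<sigma> i)) m z = tau \<nu> \<gamma> p q m z"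
  unfolding tau_def
  by (rule trace_matpow_permute[OF assms]) (simp add: Lax_def Tmat_def Smat_def Amat_def)

lemma tau_eq_poly_even_trace:
  assumes "z \<noteq> -\<gamma>/2"
  shows "tau \<nu> \<gamma> p q m z = poly (even_trace \<gamma> (Tmat \<nu> p q) (Smat \<nu> p q) (Amat \<nu> p q) m) (Lam \<gamma> z)"
  unfolding tau_def Lax_def
  by (rule trace_matpow_eq_even_trace[OF transpose_Tmat transpose_Smat transpose_Amat Xi_squared[OF assms]])

theorem mainTheorem1:
  fixes \<nu> \<gamma> :: real and p q :: "real^'n" and m :: nat
  assumes "CARD('n) \<ge> 2"
    and "\<nu> \<noteq> 0"
    and "\<gamma> \<noteq> 2" and "\<gamma> \<noteq> -2"
    and "\<forall>i. p$i > 0"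
    and "inj (\<lambda>i. q$i)"
    and "m \<ge> 1"
  shows "(\<exists>P :: real poly.
            degree P = m \<and> coeff P 0 = 0
          \<and> (\<forall>z. z \<noteq> -\<gamma>/2 \<longrightarrow> tau \<nu> \<gamma> p q m z = poly P (Lam \<gamma> z))
          \<and> coeff P 1 = real m * trace ((Tmat \<nu> p q + (\<gamma>/2) *\<^sub>R Amat \<nu> p q)
                 ** matpow (Smat \<nu> p q + Amat \<nu> p q) (m - 1)))
       \<and> (\<forall>c::real. c > 0 \<longrightarrow> (\<forall>z. z \<noteq> -\<gamma>/2 \<longrightarrow>
            tau \<nu> \<gamma> (c *\<^sub>R p) q m z = c ^ m * tau \<nu> \<gamma> p q m z))
       \<and> (\<forall>\<sigma>. \<sigma> permutes (UNIV :: 'n set) \<longrightarrow> (\<forall>z. z \<noteq> -\<gamma>/2 \<longrightarrow>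
            tau \<nu> \<gamma> (\<chi> i. p$(\<sigma> i)) (\<chi> i. q$(\<sigma> i)) m z = tau \<nu> \<gamma> p q m z))"
proof -
  note symmetry = transpose_Tmat transpose_Smat transpose_Amat
  let ?P = "even_trace \<gamma> (Tmat \<nu> p q) (Smat \<nu> p q) (Amat \<nu> p q) m"
  obtain k where m: "m = Suc k" using \<open>m \<ge> 1\<close> by (cases m) auto
  have "coeff ?P m = (\<Sum>i\<in>UNIV. p$i) ^ m"
    unfolding coeff_even_trace_top[OF symmetry] m
    by (rule trace_matpow_Tmat_plus_Amat) (use \<open>\<forall>i. p$i > 0\<close> in \<open>simp add: less_imp_le\<close>)
  moreover have "0 < (\<Sum>i\<in>UNIV. p$i)"
    using \<open>\<forall>i. p$i > 0\<close> by (simp add: sum_pos)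
  ultimately have degree: "degree ?P = m"
    using degree_even_trace_le by (metis le_antisym le_degree power_not_zero less_irrefl)
  have "trace (matpow (Smat \<nu> p q + Amat \<nu> p q) m) = 0"
    unfolding m by (rule trace_matpow_strictly_triangular) (rule Smat_plus_Amat_nonzero_imp_less)
  then have coeff_0: "coeff ?P 0 = 0"
    by (simp add: coeff_0_even_trace[OF symmetry])
  have coeff_1: "coeff ?P 1 = real m * trace ((Tmat \<nu> p q + (\<gamma>/2) *\<^sub>R Amat \<nu> p q)
                 ** matpow (Smat \<nu> p q + Amat \<nu> p q) (m - 1))"
    by (rule coeff_1_even_trace[OF symmetry])
  show ?thesis
    using degree coeff_0 coeff_1 tau_eq_poly_even_trace
    by (auto simp: tau_scaleR tau_permute intro!: exI[of _ ?P])
qed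

end
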